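(* Let $\mathcal{X},\mathcal{Y}$ be finite sets and $p(X,Y)$ a fully supported probability distribution on $\mathcal{X}\times\mathcal{Y}$, and let $\lambda=I(X;Y)$. Then the solutions of the IIB problem with parameter $\lambda$ are exactly the channels of the form $q(t|x,y)=\gamma(t\mid\pi(x,y))$ for a congruent channel $\gamma\in C(\{1,\dots,n\},\mathcal{T})$.
   Context: $\mathcal{T}:=\mathbb{N}$; $C(\mathcal{A},\mathcal{B})$ is the set of channels (conditional probabilities) from $\mathcal{A}$ to $\mathcal{B}$. For $\kappa\in C(\mathcal{X}\times\mathcal{Y},\mathcal{T})$ and a distribution $r$ on $\mathcal{X}\times\mathcal{Y}$, $\kappa(r)(t)=\sum_{x,y}\kappa(t|x,y)r(x,y)$; $I_\kappa(X,Y;T)$ is the mutual information under $p(x,y)\kappa(t|x,y)$; $D$ is the KL divergence. The IIB problem with parameter $\lambda\in[0,I(X;Y)]$: minimise $I_\kappa(X,Y;T)$ over $\kappa\in C(\mathcal{X}\times\mathcal{Y},\mathcal{T})$ subject to $D(\kappa(p(X,Y))\|\kappa(p(X)p(Y)))=\lambda$. The equivalence relation $(x,y)\sim(x',y')$ iff $\frac{p(x,y)}{p(x)p(y)}=\frac{p(x',y')}{p(x')p(y')}$ has classes $\mathcal{S}_1,\dots,\mathcal{S}_n$ partitioning $\mathcal{X}\times\mathcal{Y}$, and $\pi:\mathcal{X}\times\mathcal{Y}\to\{1,\dots,n\}$ is the deterministic clustering $\pi(x,y)=j$ iff $(x,y)\in\mathcal{S}_j$. A channel $\gamma$ is congruent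 if for distinct inputs $a\neq a'$ the supports of $\gamma(\cdot|a)$ and $\gamma(\cdot|a')$ are disjoint. *)

theory Defs
  imports "HOL-Analysis.Analysis"
begin

text \<open>Logarithms are natural (any fixed base gives the
same statement since lambda = I(X;Y) uses the same base). Convention 0 log 0 = 0 is
automatic because terms with zero weight vanish.\<close>

definition channel :: "'a set \<Rightarrow> ('a \<Rightarrow> nat \<Rightarrow> real) \<Rightarrow> bool" where
  "channel A k \<longleftrightarrow> (\<forall>a\<in>A. (\<forall>t. k a t \<ge> 0) \<and> (k a) sums 1)"

definition push :: "('a::finite \<Rightarrow> nat \<Rightarrow> real) \<Rightarrow> ('a \<Rightarrow> real) \<Rightarrow> nat \<Rightarrow> real" where
  "push k r t = (\<Sum>a\<in>UNIV. k a t * r a)"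

definition margX :: "('x::finite \<times> 'y::finite \<Rightarrow> real) \<Rightarrow> 'x \<Rightarrow> real" where
  "margX p x = (\<Sum>y\<in>UNIV. p (x, y))"

definition margY :: "('x::finite \<times> 'y::finite \<Rightarrow> real) \<Rightarrow> 'y \<Rightarrow> real" where
  "margY p y = (\<Sum>x\<in>UNIV. p (x, y))"

definition prodmarg :: "('x::finite \<times> 'y::finite \<Rightarrow> real) \<Rightarrow> 'x \<times> 'y \<Rightarrow> real" where
  "prodmarg p = (\<lambda>(x, y). margX p x * margY p y)"

definition KL :: "(nat \<Rightarrow> real) \<Rightarrow> (nat \<Rightarrow> real) \<Rightarrow> real" where
  "KL P Q = (\<Sum>t. P t * ln (P t / Q t))"

definition MI :: "('x::finite \<times> 'y::finite \<Rightarrow> real) \<Rightarrow> real" where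
  "MI p = (\<Sum>a\<in>UNIV. p a * ln (p a / prodmarg p a))"

definition MI_ch :: "('a::finite \<Rightarrow> real) \<Rightarrow> ('a \<Rightarrow> nat \<Rightarrow> real) \<Rightarrow> real" where
  "MI_ch p k = (\<Sum>t. \<Sum>a\<in>UNIV. p a * k a t * ln (k a t / push k p t))"

definition IIB_constraint :: "('x::finite \<times> 'y::finite \<Rightarrow> real) \<Rightarrow> real \<Rightarrow> ('x \<times> 'y \<Rightarrow> nat \<Rightarrow> real) \<Rightarrow> bool" where
  "IIB_constraint p lam k \<longleftrightarrow> channel UNIV k \<and> KL (push k p) (push k (prodmarg p)) = lam"

definition IIB_solution :: "('x::finite \<times> 'y::finite \<Rightarrow> real) \<Rightarrow> real \<Rightarrow> ('x \<times> 'y \<Rightarrow> nat \<Rightarrow> real) \<Rightarrow> bool" where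
  "IIB_solution p lam k \<longleftrightarrow> IIB_constraint p lam k \<and>
     (\<forall>k'. IIB_constraint p lam k' \<longrightarrow> MI_ch p k \<le> MI_ch p k')"

definition congruent_channel :: "'a set \<Rightarrow> ('a \<Rightarrow> nat \<Rightarrow> real) \<Rightarrow> bool" where
  "congruent_channel A g \<longleftrightarrow> channel A g \<and>
     (\<forall>a\<in>A. \<forall>a'\<in>A. a \<noteq> a' \<longrightarrow> (\<forall>t. g a t = 0 \<or> g a' t = 0))"

end

theory Submission
  imports Defs
begin

(* Applied to the outputs t one at a time, the log-sum inequality gives the data-processing
   inequality D(kappa(p) || kappa(p_X p_Y)) <= I(X;Y), with equality iff every output t is reached
   only from inputs with one common ratio p / (p_X p_Y), i.e. from a single class S_j. For such
   channels the log-sum inequality, now applied inside the class feeding t, bounds I(X,Y;T) below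
   by the entropy H(pi) of the classes, with equality iff kappa(t|.) is constant on every class.
   The deterministic channel pi is feasible and attains H(pi), so the IIB solutions are exactly
   the channels whose outputs reveal the class and which depend on the input only through it,
   i.e. gamma o pi with gamma congruent. *)

lemma mult_ln_div_ge_diff:
  fixes u v :: real
  assumes "0 \<le> u" "0 \<le> v" "v = 0 \<Longrightarrow> u = 0"
  shows "u - v \<le> u * ln (u / v)"
proof (cases "u = 0")
  case True
  with assms show ?thesis by simp
next
  case False
  with assms have "0 < u" "0 < v" by (auto simp: less_le)
  then have "ln (v / u) \<le> v / u - 1" by (simp add: ln_le_minus_one)
  then have "u * ln (v / u) \<le> v - u" using \<open>0 < u\<close> by (simp add: field_simps)
  with \<open>0 < u\<close> \<open>0 < v\<close> show ?thesis by (simp add: ln_div algebra_simps)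
qed

lemma mult_ln_div_eq_diff_iff:
  fixes u v :: real
  assumes "0 \<le> u" "0 \<le> v" "v = 0 \<Longrightarrow> u = 0"
  shows "u * ln (u / v) = u - v \<longleftrightarrow> u = v"
proof
  assume eq: "u * ln (u / v) = u - v"
  show "u = v"
  proof (cases "u = 0")
    case True
    with eq show ?thesis by simp
  next
    case False
    with assms have "0 < u" "0 < v" by (auto simp: less_le)
    with eq have "u * ln (v / u) = v - u" by (simp add: ln_div algebra_simps)
    then have "ln (v / u) = v / u - 1" using \<open>0 < u\<close> by (simp add: field_simps)
    then have "v / u = 1" using \<open>0 < u\<close> \<open>0 < v\<close> by (intro ln_eq_minus_one) auto
    with \<open>0 < u\<close> show ?thesis by simp
  qed
qed simp

lemma gibbs_inequality:
  fixes u v :: "'i \<Rightarrow> real"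
  assumes "finite I" and uv: "\<forall>i\<in>I. 0 \<le> u i \<and> 0 \<le> v i \<and> (v i = 0 \<longrightarrow> u i = 0)"
    and "sum u I = sum v I"
  shows "0 \<le> (\<Sum>i\<in>I. u i * ln (u i / v i))"
    and "(\<Sum>i\<in>I. u i * ln (u i / v i)) = 0 \<longleftrightarrow> (\<forall>i\<in>I. u i = v i)"
proof -
  define d where "d i = u i * ln (u i / v i) - (u i - v i)" for i
  have d_nonneg: "\<forall>i\<in>I. 0 \<le> d i"
    using uv mult_ln_div_ge_diff by (simp add: d_def)
  have "(\<Sum>i\<in>I. u i * ln (u i / v i)) = sum d I"
    using assms(3) by (simp add: d_def sum_subtractf)
  moreover have "sum d I = 0 \<longleftrightarrow> (\<forall>i\<in>I. d i = 0)"
    using sum_nonneg_eq_0_iff[OF assms(1)] d_nonneg by blast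
  moreover have "d i = 0 \<longleftrightarrow> u i = v i" if "i \<in> I" for i
    using uv mult_ln_div_eq_diff_iff that unfolding d_def by auto
  ultimately show "0 \<le> (\<Sum>i\<in>I. u i * ln (u i / v i))"
    and "(\<Sum>i\<in>I. u i * ln (u i / v i)) = 0 \<longleftrightarrow> (\<forall>i\<in>I. u i = v i)"
    using d_nonneg by (simp_all add: sum_nonneg)
qed

lemma sum_mult_ln_div_mult_left:
  fixes u v :: "'i \<Rightarrow> real"
  assumes uv: "\<forall>i\<in>I. 0 \<le> u i \<and> 0 \<le> v i \<and> (v i = 0 \<longrightarrow> u i = 0)" and c: "0 < c"
  shows "(\<Sum>i\<in>I. u i * ln (u i / (c * v i))) = (\<Sum>i\<in>I. u i * ln (u i / v i)) - sum u I * ln c"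
proof -
  have "u i * ln (u i / (c * v i)) = u i * ln (u i / v i) - u i * ln c" if "i \<in> I" for i
  proof (cases "u i = 0")
    case False
    with uv that have "0 < u i" "0 < v i" by (auto simp: less_le)
    with c show ?thesis by (simp add: ln_div ln_mult algebra_simps)
  qed simp
  then show ?thesis by (simp add: sum_subtractf sum_distrib_right)
qed

lemma log_sum_inequality:
  fixes u v :: "'i \<Rightarrow> real"
  assumes fin: "finite I" and uv: "\<forall>i\<in>I. 0 \<le> u i \<and> 0 \<le> v i \<and> (v i = 0 \<longrightarrow> u i = 0)"
  shows "sum u I * ln (sum u I / sum v I) \<le> (\<Sum>i\<in>I. u i * ln (u i / v i))"
    and "sum u I * ln (sum u I / sum v I) = (\<Sum>i\<in>I. u i * ln (u i / v i))
           \<longleftrightarrow> (\<exists>c. \<forall>i\<in>I. u i = c * v i)"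
proof -
  let ?U = "sum u I" and ?V = "sum v I" and ?S = "\<Sum>i\<in>I. u i * ln (u i / v i)"
  have "?U * ln (?U / ?V) \<le> ?S \<and> (?U * ln (?U / ?V) = ?S \<longleftrightarrow> (\<exists>c. \<forall>i\<in>I. u i = c * v i))"
  proof (cases "?U = 0")
    case True
    then have "\<forall>i\<in>I. u i = 0" using sum_nonneg_eq_0_iff[OF fin] uv by blast
    then have "?S = 0" and "\<forall>i\<in>I. u i = 0 * v i" by simp_all
    with True show ?thesis by auto
  next
    case False
    have U_pos: "0 < ?U" using False uv by (simp add: less_le sum_nonneg)
    have "\<not> (\<forall>i\<in>I. v i = 0)"
    proof
      assume "\<forall>i\<in>I. v i = 0"
      then have "\<forall>i\<in>I. u i = 0" using uv by blast
      with False show False by simp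
    qed
    then have V_pos: "0 < ?V" using sum_nonneg_eq_0_iff[OF fin, of v] uv by (simp add: less_le sum_nonneg)
    define c where "c = ?U / ?V"
    have c_pos: "0 < c" using U_pos V_pos by (simp add: c_def)
    note shifted = sum_mult_ln_div_mult_left[OF uv c_pos]
    have cv: "\<forall>i\<in>I. 0 \<le> u i \<and> 0 \<le> c * v i \<and> (c * v i = 0 \<longrightarrow> u i = 0)"
      using uv c_pos by simp
    have "sum u I = sum (\<lambda>i. c * v i) I"
      unfolding sum_distrib_left[symmetric] c_def using V_pos by simp
    note gibbs = gibbs_inequality[OF fin cv this]
    have "(\<exists>c'. \<forall>i\<in>I. u i = c' * v i) \<longleftrightarrow> (\<forall>i\<in>I. u i = c * v i)"
    proof
      assume "\<exists>c'. \<forall>i\<in>I. u i = c' * v i"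
      then obtain c' where c': "\<forall>i\<in>I. u i = c' * v i" ..
      then have "?U = c' * ?V" by (simp add: sum_distrib_left)
      with c' V_pos show "\<forall>i\<in>I. u i = c * v i" by (simp add: c_def)
    qed blast
    moreover have "?U * ln (?U / ?V) = ?U * ln c" by (simp add: c_def)
    ultimately show ?thesis using gibbs shifted by auto
  qed
  then show "?U * ln (?U / ?V) \<le> ?S" and "?U * ln (?U / ?V) = ?S \<longleftrightarrow> (\<exists>c. \<forall>i\<in>I. u i = c * v i)"
    by blast+
qed

lemma channel_sums_weighted:
  fixes k :: "'a::finite \<Rightarrow> nat \<Rightarrow> real"
  assumes "channel UNIV k"
  shows "(\<lambda>t. \<Sum>a\<in>UNIV. k a t * w a) sums (\<Sum>a\<in>UNIV. w a)"
proof -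
  have "(\<lambda>t. \<Sum>a\<in>UNIV. k a t * w a) sums (\<Sum>a\<in>UNIV. 1 * w a)"
    using assms unfolding channel_def by (intro sums_sum sums_mult2) auto
  then show ?thesis by simp
qed

lemma push_sums: "channel UNIV k \<Longrightarrow> push k w sums (\<Sum>a\<in>UNIV. w a)"
  unfolding push_def by (rule channel_sums_weighted)

lemma push_nonneg: "\<forall>a. 0 \<le> k a t \<Longrightarrow> \<forall>a. 0 \<le> w a \<Longrightarrow> 0 \<le> push k w t"
  unfolding push_def by (simp add: sum_nonneg)

lemma push_eq_0_iff:
  assumes "\<forall>a. 0 \<le> k a t" and "\<forall>a. 0 < w a"
  shows "push k w t = 0 \<longleftrightarrow> (\<forall>a. k a t = 0)"
proof -
  have "k a t * w a = 0 \<longleftrightarrow> k a t = 0" for a using assms(2) by (simp add: less_le)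
  then show ?thesis
    using assms unfolding push_def by (subst sum_nonneg_eq_0_iff) (auto simp: less_imp_le)
qed

lemma summable_between:
  fixes f g h :: "nat \<Rightarrow> real"
  assumes "summable g" "summable h" "\<And>n. g n \<le> f n" "\<And>n. f n \<le> h n"
  shows "summable f"
proof -
  have "summable (\<lambda>n. f n - g n)"
  proof (rule summable_comparison_test')
    show "summable (\<lambda>n. h n - g n)" using assms(2,1) by (rule summable_diff)
    show "norm (f n - g n) \<le> h n - g n" for n using assms(3,4)[of n] by simp
  qed
  then have "summable (\<lambda>n. (f n - g n) + g n)" using assms(1) by (rule summable_add)
  then show ?thesis by simp
qed

lemma suminf_eq_iff_of_le:
  fixes f g :: "nat \<Rightarrow> real"
  assumes "summable f" "summable g" "\<And>n. f n \<le> g n"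
  shows "suminf f = suminf g \<longleftrightarrow> f = g"
proof -
  have "suminf f = suminf g \<longleftrightarrow> suminf (\<lambda>n. g n - f n) = 0"
    using suminf_diff[OF assms(2,1)] by auto
  also have "\<dots> \<longleftrightarrow> (\<forall>n. g n - f n = 0)"
    using assms by (intro suminf_eq_zero_iff summable_diff) auto
  finally show ?thesis by (auto simp: fun_eq_iff)
qed

definition output_determines :: "('a \<Rightarrow> nat \<Rightarrow> real) \<Rightarrow> ('a \<Rightarrow> 'b) \<Rightarrow> bool" where
  "output_determines k f \<longleftrightarrow> (\<forall>t a b. 0 < k a t \<longrightarrow> 0 < k b t \<longrightarrow> f a = f b)"

lemma push_log_sum_inequality:
  fixes k :: "'a::finite \<Rightarrow> nat \<Rightarrow> real" and p r :: "'a \<Rightarrow> real"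
  assumes k: "\<forall>a. 0 \<le> k a t" and p: "\<forall>a. 0 \<le> p a" and r: "\<forall>a. 0 < r a"
  shows "push k p t * ln (push k p t / push k r t) \<le> (\<Sum>a\<in>UNIV. k a t * (p a * ln (p a / r a)))"
    and "push k p t * ln (push k p t / push k r t) = (\<Sum>a\<in>UNIV. k a t * (p a * ln (p a / r a)))
           \<longleftrightarrow> (\<forall>a b. 0 < k a t \<longrightarrow> 0 < k b t \<longrightarrow> p a / r a = p b / r b)"
proof -
  define u where "u a = k a t * p a" for a
  define v where "v a = k a t * r a" for a
  have uv: "\<forall>a\<in>UNIV. 0 \<le> u a \<and> 0 \<le> v a \<and> (v a = 0 \<longrightarrow> u a = 0)"
  proof
    fix a
    show "0 \<le> u a \<and> 0 \<le> v a \<and> (v a = 0 \<longrightarrow> u a = 0)"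
      using k[rule_format, of a] p[rule_format, of a] r[rule_format, of a] by (simp add: u_def v_def)
  qed
  have sums: "sum u UNIV = push k p t" "sum v UNIV = push k r t"
    by (simp_all add: u_def v_def push_def)
  have terms: "(\<Sum>a\<in>UNIV. u a * ln (u a / v a)) = (\<Sum>a\<in>UNIV. k a t * (p a * ln (p a / r a)))"
    by (rule sum.cong) (simp_all add: u_def v_def)
  have "u a = c * v a \<longleftrightarrow> (0 < k a t \<longrightarrow> p a / r a = c)" for a c
  proof (cases "k a t = 0")
    case False
    with k have "0 < k a t" by (simp add: less_le)
    with r[rule_format, of a] show ?thesis by (simp add: u_def v_def field_simps)
  qed (simp add: u_def v_def)
  then have "(\<exists>c. \<forall>a\<in>UNIV. u a = c * v a) \<longleftrightarrow> (\<exists>c. \<forall>a. 0 < k a t \<longrightarrow> p a / r a = c)"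
    by simp
  also have "\<dots> \<longleftrightarrow> (\<forall>a b. 0 < k a t \<longrightarrow> 0 < k b t \<longrightarrow> p a / r a = p b / r b)"
    by blast
  finally show "push k p t * ln (push k p t / push k r t) \<le> (\<Sum>a\<in>UNIV. k a t * (p a * ln (p a / r a)))"
    and "push k p t * ln (push k p t / push k r t) = (\<Sum>a\<in>UNIV. k a t * (p a * ln (p a / r a)))
           \<longleftrightarrow> (\<forall>a b. 0 < k a t \<longrightarrow> 0 < k b t \<longrightarrow> p a / r a = p b / r b)"
    using log_sum_inequality[OF _ uv] sums terms by simp_all
qed

theorem KL_push_le:
  fixes k :: "'a::finite \<Rightarrow> nat \<Rightarrow> real" and p r :: "'a \<Rightarrow> real"
  assumes k: "channel UNIV k" and p: "\<forall>a. 0 \<le> p a" and r: "\<forall>a. 0 < r a"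
  shows "KL (push k p) (push k r) \<le> (\<Sum>a\<in>UNIV. p a * ln (p a / r a))"
    and "KL (push k p) (push k r) = (\<Sum>a\<in>UNIV. p a * ln (p a / r a))
           \<longleftrightarrow> output_determines k (\<lambda>a. p a / r a)"
proof -
  define g where "g t = push k p t * ln (push k p t / push k r t)" for t
  define h where "h t = (\<Sum>a\<in>UNIV. k a t * (p a * ln (p a / r a)))" for t
  have k_nonneg: "\<forall>a. 0 \<le> k a t" for t
    using k unfolding channel_def by blast
  have h_sums: "h sums (\<Sum>a\<in>UNIV. p a * ln (p a / r a))"
    unfolding h_def using k by (rule channel_sums_weighted)
  have g_le_h: "g t \<le> h t"
    and g_eq_h_iff: "g t = h t \<longleftrightarrow> (\<forall>a b. 0 < k a t \<longrightarrow> 0 < k b t \<longrightarrow> p a / r a = p b / r b)" for t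
    unfolding g_def h_def using push_log_sum_inequality[of k t p r] k_nonneg p r by blast+
  have g_lower: "push k p t - push k r t \<le> g t" for t
  proof -
    have "push k r t = 0 \<Longrightarrow> push k p t = 0"
      using push_eq_0_iff[of k t r] k_nonneg r by (simp add: push_def)
    then show ?thesis
      unfolding g_def using push_nonneg[of k t] k_nonneg p r
      by (intro mult_ln_div_ge_diff) (auto simp: less_imp_le)
  qed
  have "summable g"
  proof (rule summable_between[OF _ _ g_lower g_le_h])
    show "summable (\<lambda>t. push k p t - push k r t)"
      using push_sums[OF k] by (intro summable_diff) (auto intro: sums_summable)
  qed (use h_sums in \<open>rule sums_summable\<close>)
  moreover have "KL (push k p) (push k r) = suminf g"
    by (simp add: KL_def g_def[abs_def])
  moreover have "(\<Sum>a\<in>UNIV. p a * ln (p a / r a)) = suminf h"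
    using h_sums by (rule sums_unique)
  moreover have "g = h \<longleftrightarrow> output_determines k (\<lambda>a. p a / r a)"
    unfolding output_determines_def fun_eq_iff using g_eq_h_iff by blast
  ultimately show "KL (push k p) (push k r) \<le> (\<Sum>a\<in>UNIV. p a * ln (p a / r a))"
    and "KL (push k p) (push k r) = (\<Sum>a\<in>UNIV. p a * ln (p a / r a))
           \<longleftrightarrow> output_determines k (\<lambda>a. p a / r a)"
    using g_le_h h_sums suminf_eq_iff_of_le[of g h] by (auto intro: suminf_le sums_summable)
qed

definition cell_mass :: "('a::finite \<Rightarrow> real) \<Rightarrow> ('a \<Rightarrow> 'b) \<Rightarrow> 'b \<Rightarrow> real" where
  "cell_mass p f j = (\<Sum>a | f a = j. p a)"

definition partition_entropy :: "('a::finite \<Rightarrow> real) \<Rightarrow> ('a \<Rightarrow> 'b) \<Rightarrow> real" where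
  "partition_entropy p f = (\<Sum>a\<in>UNIV. - (p a * ln (cell_mass p f (f a))))"

definition factors_through :: "('a \<Rightarrow> nat \<Rightarrow> real) \<Rightarrow> ('a \<Rightarrow> 'b) \<Rightarrow> bool" where
  "factors_through k f \<longleftrightarrow> (\<forall>a b. f a = f b \<longrightarrow> k a = k b)"

lemma MI_ch_summand_le:
  fixes k :: "'a::finite \<Rightarrow> nat \<Rightarrow> real"
  assumes p: "\<forall>b. 0 < p b" and k: "\<forall>b. 0 \<le> k b t"
  shows "p a * k a t * ln (k a t / push k p t) \<le> k a t * - (p a * ln (p a))"
proof (cases "k a t = 0")
  case False
  with k have ka: "0 < k a t" by (simp add: less_le)
  have pa: "0 < p a" using p by blast
  have kp_le: "k a t * p a \<le> push k p t"
    unfolding push_def using k p by (intro member_le_sum) (auto simp: less_imp_le)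
  with ka pa have q_pos: "0 < push k p t"
    by (meson less_le_trans mult_pos_pos)
  with kp_le pa have "k a t / push k p t \<le> 1 / p a"
    by (simp add: divide_simps mult.commute)
  moreover have "0 < k a t / push k p t" using ka q_pos by simp
  ultimately have "ln (k a t / push k p t) \<le> ln (1 / p a)" using pa by simp
  also have "ln (1 / p a) = - ln (p a)" using pa by (simp add: ln_div)
  finally have "p a * k a t * ln (k a t / push k p t) \<le> p a * k a t * - ln (p a)"
    using ka pa by (intro mult_left_mono) simp_all
  then show ?thesis by (simp add: mult_ac)
qed simp

lemma partition_entropy_term_le_MI_ch_term_in_cell:
  fixes k :: "'a::finite \<Rightarrow> nat \<Rightarrow> real" and p :: "'a \<Rightarrow> real" and f :: "'a \<Rightarrow> 'b"
  assumes p: "\<forall>a. 0 < p a" and k: "\<forall>a. 0 \<le> k a t"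
    and cell: "\<forall>a. 0 < k a t \<longrightarrow> f a = j" and supported: "0 < k b t"
  defines "E \<equiv> \<Sum>a\<in>UNIV. k a t * - (p a * ln (cell_mass p f (f a)))"
    and "F \<equiv> \<Sum>a\<in>UNIV. p a * k a t * ln (k a t / push k p t)"
  shows "E \<le> F" and "E = F \<longleftrightarrow> (\<exists>c. \<forall>a. f a = j \<longrightarrow> k a t = c)"
proof -
  define q where "q = push k p t"
  define P where "P = cell_mass p f j"
  have q_pos: "0 < q"
    using push_nonneg[of k t p] push_eq_0_iff[of k t p] k p supported by (force simp: q_def less_le)
  have "p b \<le> P"
    unfolding P_def cell_mass_def using p cell supported by (intro member_le_sum) (auto simp: less_imp_le)
  with p have P_pos: "0 < P" by (meson less_le_trans)
  have outside: "k a t = 0" if "f a \<noteq> j" for a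
    using cell k[rule_format, of a] that by force
  define u where "u a = p a * k a t" for a
  (* p restricted to the cell, so that u / v = k(., t) wherever u is nonzero *)
  define v where "v a = (if f a = j then p a else 0)" for a
  have uv: "\<forall>a\<in>UNIV. 0 \<le> u a \<and> 0 \<le> v a \<and> (v a = 0 \<longrightarrow> u a = 0)"
    using p k outside by (auto simp: u_def v_def less_imp_le)
  have sum_u: "sum u UNIV = q"
    by (simp add: u_def q_def push_def mult.commute)
  have sum_v: "sum v UNIV = P"
    by (simp add: v_def P_def cell_mass_def sum.inter_filter[symmetric])
  have F: "F = (\<Sum>a\<in>UNIV. u a * ln (u a / v a)) - q * ln q"
  proof -
    have "p a * k a t * ln (k a t / q) = u a * ln (u a / v a) - u a * ln q" for a
    proof (cases "k a t = 0")
      case False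
      with k outside have "0 < k a t" "f a = j" by (auto simp: less_le)
      moreover from this p[rule_format, of a] have "u a / v a = k a t" by (simp add: u_def v_def)
      ultimately show ?thesis using q_pos by (simp add: u_def ln_div algebra_simps)
    qed (simp add: u_def)
    then show ?thesis
      by (simp add: F_def q_def[symmetric] sum_subtractf sum_u flip: sum_distrib_right)
  qed
  have E: "E = - (q * ln P)"
  proof -
    have "k a t * - (p a * ln (cell_mass p f (f a))) = - (u a * ln P)" for a
      using outside[of a] by (cases "f a = j") (auto simp: u_def P_def)
    then have "E = (\<Sum>a\<in>UNIV. - (u a * ln P))" by (simp add: E_def)
    also have "\<dots> = - (sum u UNIV * ln P)" by (simp add: sum_negf sum_distrib_right)
    finally show ?thesis by (simp add: sum_u)
  qed
  have gap: "F - E = (\<Sum>a\<in>UNIV. u a * ln (u a / v a)) - q * ln (q / P)"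
    using q_pos P_pos by (simp add: F E ln_div right_diff_distrib)
  note log_sum = log_sum_inequality[OF _ uv, unfolded sum_u sum_v]
  show "E \<le> F" using gap log_sum(1) by simp
  have "u a = c * v a \<longleftrightarrow> (f a = j \<longrightarrow> k a t = c)" for a c
    using outside[of a] p[rule_format, of a] by (auto simp: u_def v_def)
  then have "(\<exists>c. \<forall>a\<in>UNIV. u a = c * v a) \<longleftrightarrow> (\<exists>c. \<forall>a. f a = j \<longrightarrow> k a t = c)"
    by simp
  moreover have "E = F \<longleftrightarrow> q * ln (q / P) = (\<Sum>a\<in>UNIV. u a * ln (u a / v a))"
    using gap by linarith
  ultimately show "E = F \<longleftrightarrow> (\<exists>c. \<forall>a. f a = j \<longrightarrow> k a t = c)"
    using log_sum(2) by simp
qed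

lemma partition_entropy_term_le_MI_ch_term:
  fixes k :: "'a::finite \<Rightarrow> nat \<Rightarrow> real" and p :: "'a \<Rightarrow> real" and f :: "'a \<Rightarrow> 'b"
  assumes p: "\<forall>a. 0 < p a" and k: "\<forall>a. 0 \<le> k a t"
    and pure: "\<forall>a b. 0 < k a t \<longrightarrow> 0 < k b t \<longrightarrow> f a = f b"
  defines "E \<equiv> \<Sum>a\<in>UNIV. k a t * - (p a * ln (cell_mass p f (f a)))"
    and "F \<equiv> \<Sum>a\<in>UNIV. p a * k a t * ln (k a t / push k p t)"
  shows "E \<le> F" and "E = F \<longleftrightarrow> (\<forall>a b. f a = f b \<longrightarrow> k a t = k b t)"
proof -
  have "E \<le> F \<and> (E = F \<longleftrightarrow> (\<forall>a b. f a = f b \<longrightarrow> k a t = k b t))"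
  proof (cases "\<exists>a. 0 < k a t")
    case False
    with k have "\<forall>a. k a t = 0" by (auto simp: less_le)
    then show ?thesis by (simp add: E_def F_def)
  next
    case True
    then obtain a0 where a0: "0 < k a0 t" ..
    with pure have cell: "\<forall>a. 0 < k a t \<longrightarrow> f a = f a0" by blast
    have outside: "k a t = 0" if "f a \<noteq> f a0" for a
      using cell k[rule_format, of a] that by force
    have "(\<exists>c. \<forall>a. f a = f a0 \<longrightarrow> k a t = c) \<longleftrightarrow> (\<forall>a b. f a = f b \<longrightarrow> k a t = k b t)"
    proof
      assume "\<exists>c. \<forall>a. f a = f a0 \<longrightarrow> k a t = c"
      then obtain c where c: "\<forall>a. f a = f a0 \<longrightarrow> k a t = c" ..
      show "\<forall>a b. f a = f b \<longrightarrow> k a t = k b t"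
      proof (intro allI impI)
        fix a b assume "f a = f b"
        then show "k a t = k b t" using c outside by (cases "f a = f a0") auto
      qed
    qed blast
    with partition_entropy_term_le_MI_ch_term_in_cell[of p k t f "f a0" a0,
        OF p k cell a0, folded E_def F_def]
    show ?thesis by simp
  qed
  then show "E \<le> F" and "E = F \<longleftrightarrow> (\<forall>a b. f a = f b \<longrightarrow> k a t = k b t)"
    by blast+
qed

theorem partition_entropy_le_MI_ch:
  fixes p :: "'a::finite \<Rightarrow> real" and f :: "'a \<Rightarrow> 'b"
  assumes p: "\<forall>a. 0 < p a" and k: "channel UNIV k" and pure: "output_determines k f"
  shows "partition_entropy p f \<le> MI_ch p k"
    and "MI_ch p k = partition_entropy p f \<longleftrightarrow> factors_through k f"
proof -
  define E where "E t = (\<Sum>a\<in>UNIV. k a t * - (p a * ln (cell_mass p f (f a))))" for t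
  define F where "F t = (\<Sum>a\<in>UNIV. p a * k a t * ln (k a t / push k p t))" for t
  define W where "W t = (\<Sum>a\<in>UNIV. k a t * - (p a * ln (p a)))" for t
  have k_nonneg: "\<forall>a. 0 \<le> k a t" for t
    using k unfolding channel_def by blast
  have E_le_F: "E t \<le> F t"
    and E_eq_F_iff: "E t = F t \<longleftrightarrow> (\<forall>a b. f a = f b \<longrightarrow> k a t = k b t)" for t
    using partition_entropy_term_le_MI_ch_term[of p k t f] p k_nonneg pure
    unfolding output_determines_def E_def F_def by blast+
  have E_sums: "E sums partition_entropy p f"
    unfolding E_def partition_entropy_def using k by (rule channel_sums_weighted)
  have F_le_W: "F t \<le> W t" for t
    unfolding F_def W_def using p k_nonneg by (intro sum_mono MI_ch_summand_le)
  have E_summable: "summable E"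
    using E_sums by (rule sums_summable)
  have "summable W"
    unfolding W_def using channel_sums_weighted[OF k] by (rule sums_summable)
  with E_summable have F_summable: "summable F"
    by (rule summable_between[OF _ _ E_le_F F_le_W])
  have MI_ch_eq: "MI_ch p k = suminf F"
    by (simp add: MI_ch_def F_def[abs_def])
  have entropy_eq: "partition_entropy p f = suminf E"
    using E_sums by (rule sums_unique)
  show "partition_entropy p f \<le> MI_ch p k"
    unfolding MI_ch_eq entropy_eq using E_le_F E_summable F_summable by (rule suminf_le)
  have "E = F \<longleftrightarrow> factors_through k f"
    unfolding factors_through_def fun_eq_iff E_eq_F_iff by blast
  then show "MI_ch p k = partition_entropy p f \<longleftrightarrow> factors_through k f"
    unfolding MI_ch_eq entropy_eq using suminf_eq_iff_of_le[OF E_summable F_summable E_le_F] by auto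
qed

lemma prodmarg_pos:
  fixes p :: "'x::finite \<times> 'y::finite \<Rightarrow> real"
  assumes "\<forall>a. 0 < p a"
  shows "0 < prodmarg p a"
  using assms unfolding prodmarg_def margX_def margY_def
  by (cases a) (auto intro!: sum_pos mult_pos_pos)

lemma IIB_constraint_MI_iff:
  fixes p :: "'x::finite \<times> 'y::finite \<Rightarrow> real" and f :: "'x \<times> 'y \<Rightarrow> 'b"
  assumes pos: "\<forall>a. 0 < p a"
    and classes: "\<forall>a b. f a = f b \<longleftrightarrow> p a / prodmarg p a = p b / prodmarg p b"
  shows "IIB_constraint p (MI p) k \<longleftrightarrow> channel UNIV k \<and> output_determines k f"
proof -
  have "output_determines k (\<lambda>a. p a / prodmarg p a) \<longleftrightarrow> output_determines k f"
    using classes unfolding output_determines_def by simp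
  moreover have "channel UNIV k \<Longrightarrow>
      KL (push k p) (push k (prodmarg p)) = MI p \<longleftrightarrow> output_determines k (\<lambda>a. p a / prodmarg p a)"
    unfolding MI_def using pos prodmarg_pos[OF pos]
    by (intro KL_push_le(2)) (auto simp: less_imp_le)
  ultimately show ?thesis
    unfolding IIB_constraint_def by blast
qed

lemma congruent_channel_comp_iff:
  fixes f :: "'a \<Rightarrow> 'b"
  assumes range: "range f = J"
  shows "(\<exists>\<gamma>. congruent_channel J \<gamma> \<and> k = (\<lambda>a t. \<gamma> (f a) t)) \<longleftrightarrow>
         channel UNIV k \<and> output_determines k f \<and> factors_through k f"
proof
  assume "\<exists>\<gamma>. congruent_channel J \<gamma> \<and> k = (\<lambda>a t. \<gamma> (f a) t)"
  then obtain \<gamma> where \<gamma>: "congruent_channel J \<gamma>" and k: "k = (\<lambda>a t. \<gamma> (f a) t)" by blast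
  have f_in: "f a \<in> J" for a using range by blast
  have disjoint: "\<forall>j\<in>J. \<forall>j'\<in>J. j \<noteq> j' \<longrightarrow> (\<forall>t. \<gamma> j t = 0 \<or> \<gamma> j' t = 0)"
    using \<gamma> unfolding congruent_channel_def by blast
  have "channel J \<gamma>" using \<gamma> unfolding congruent_channel_def by blast
  then have "channel UNIV k"
    using f_in unfolding k channel_def by simp
  moreover have "output_determines k f"
    unfolding output_determines_def
  proof (intro allI impI)
    fix t a b
    assume pos: "0 < k a t" "0 < k b t"
    show "f a = f b"
    proof (rule ccontr)
      assume "f a \<noteq> f b"
      with disjoint f_in have "\<gamma> (f a) t = 0 \<or> \<gamma> (f b) t = 0" by blast
      with pos show False unfolding k by auto
    qed
  qed
  moreover have "factors_through k f"
    unfolding k factors_through_def by simp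
  ultimately show "channel UNIV k \<and> output_determines k f \<and> factors_through k f" by blast
next
  assume "channel UNIV k \<and> output_determines k f \<and> factors_through k f"
  then have ch: "channel UNIV k" and det: "output_determines k f" and fac: "factors_through k f"
    by blast+
  define \<gamma> where "\<gamma> j = k (inv_into UNIV f j)" for j
  have rep: "f (inv_into UNIV f j) = j" if "j \<in> J" for j
    using that range by (simp add: f_inv_into_f)
  have "k = (\<lambda>a t. \<gamma> (f a) t)"
  proof (intro ext)
    fix a t
    have "f (inv_into UNIV f (f a)) = f a" by (simp add: f_inv_into_f)
    then have "k (inv_into UNIV f (f a)) = k a"
      using fac unfolding factors_through_def by blast
    then show "k a t = \<gamma> (f a) t" by (simp add: \<gamma>_def)
  qed
  moreover have "congruent_channel J \<gamma>"
    unfolding congruent_channel_def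
  proof (intro conjI ballI allI impI)
    show "channel J \<gamma>" using ch unfolding channel_def \<gamma>_def by blast
    fix j j' t
    assume j: "j \<in> J" and j': "j' \<in> J" and "j \<noteq> j'"
    have "\<not> (0 < \<gamma> j t \<and> 0 < \<gamma> j' t)"
    proof
      assume "0 < \<gamma> j t \<and> 0 < \<gamma> j' t"
      then have "f (inv_into UNIV f j) = f (inv_into UNIV f j')"
        using det unfolding output_determines_def \<gamma>_def by blast
      with rep[OF j] rep[OF j'] \<open>j \<noteq> j'\<close> show False by simp
    qed
    moreover have "0 \<le> \<gamma> j t" "0 \<le> \<gamma> j' t" using ch unfolding channel_def \<gamma>_def by blast+
    ultimately show "\<gamma> j t = 0 \<or> \<gamma> j' t = 0" by linarith
  qed
  ultimately show "\<exists>\<gamma>. congruent_channel J \<gamma> \<and> k = (\<lambda>a t. \<gamma> (f a) t)" by blast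
qed

lemma IIB_solution_MI_iff:
  fixes p :: "'x::finite \<times> 'y::finite \<Rightarrow> real" and f :: "'x \<times> 'y \<Rightarrow> nat"
  assumes pos: "\<forall>a. 0 < p a"
    and classes: "\<forall>a b. f a = f b \<longleftrightarrow> p a / prodmarg p a = p b / prodmarg p b"
  shows "IIB_solution p (MI p) k \<longleftrightarrow>
         channel UNIV k \<and> output_determines k f \<and> factors_through k f"
proof -
  note constraint_iff = IIB_constraint_MI_iff[OF pos classes]
  note entropy_bound = partition_entropy_le_MI_ch[OF pos]
  define k\<^sub>0 where "k\<^sub>0 a t = (if t = f a then 1 else 0 :: real)" for a t
  have "channel UNIV k\<^sub>0"
    unfolding channel_def k\<^sub>0_def by (auto intro: sums_single[of _ "\<lambda>_. 1", simplified])
  moreover have "output_determines k\<^sub>0 f" and "factors_through k\<^sub>0 f"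
    unfolding output_determines_def factors_through_def k\<^sub>0_def by auto
  ultimately have k\<^sub>0_feasible: "IIB_constraint p (MI p) k\<^sub>0"
    and k\<^sub>0_value: "MI_ch p k\<^sub>0 = partition_entropy p f"
    using constraint_iff entropy_bound(2) by blast+
  have lower: "partition_entropy p f \<le> MI_ch p k'" if "IIB_constraint p (MI p) k'" for k'
    using that constraint_iff entropy_bound(1) by blast
  have "IIB_solution p (MI p) k \<longleftrightarrow>
      IIB_constraint p (MI p) k \<and> MI_ch p k = partition_entropy p f"
  proof
    assume "IIB_solution p (MI p) k"
    then have "IIB_constraint p (MI p) k" and "MI_ch p k \<le> MI_ch p k\<^sub>0"
      using k\<^sub>0_feasible unfolding IIB_solution_def by blast+
    with lower[of k] k\<^sub>0_value
    show "IIB_constraint p (MI p) k \<and> MI_ch p k = partition_entropy p f" by simp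
  next
    assume "IIB_constraint p (MI p) k \<and> MI_ch p k = partition_entropy p f"
    with lower show "IIB_solution p (MI p) k" unfolding IIB_solution_def by simp
  qed
  then show ?thesis
    using constraint_iff entropy_bound(2) by blast
qed

theorem corollary9:
  fixes p :: "'x::finite \<times> 'y::finite \<Rightarrow> real"
    and \<pi> :: "'x \<times> 'y \<Rightarrow> nat" and n :: nat
  assumes pos: "\<forall>a. p a > 0"
    and total: "(\<Sum>a\<in>UNIV. p a) = 1"
    and pi_range: "\<pi> ` UNIV = {1..n}"
    and pi_classes: "\<forall>a b. \<pi> a = \<pi> b \<longleftrightarrow> p a / prodmarg p a = p b / prodmarg p b"
  shows "{k. IIB_solution p (MI p) k} =
         {k. \<exists>\<gamma>. congruent_channel {1..n} \<gamma> \<and> k = (\<lambda>a t. \<gamma> (\<pi> a) t)}"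
  using IIB_solution_MI_iff[OF pos pi_classes] congruent_channel_comp_iff[OF pi_range]
  by blast

end
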